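(* Let $\mathbb{E}$ be a finite-dimensional real inner-product space and $\mathcal{C}\subseteq\mathbb{E}$ a compact convex set. Then the nonempty exposed faces of $\mathcal{C}^\circ$ other than $\mathcal{C}^\circ$ itself are precisely the nonempty sets of the form \[ F_{\bar x}:=\{y\in N_{\mathcal{C}}(\bar x) : \langle y,\bar x\rangle=1\} \] as $\bar x$ ranges over $\mathcal{C}$. Moreover, for any such face, $\operatorname{relint}(F_{\bar x})=\{y\in\operatorname{relint}(N_{\mathcal{C}}(\bar x)) : \langle y,\bar x\rangle=1\}$.
   Context: $\mathcal{C}^\circ:=\{y\in\mathbb{E}^*:\langle y,x\rangle\le1\ \forall x\in\mathcal{C}\}$ is the polar. $N_{\mathcal{C}}(\bar x):=\{y\in\mathbb{E}^*:\langle y,x\rangle\le\langle y,\bar x\rangle\ \forall x\in\mathcal{C}\}$ is the normal cone. An exposed face of a convex set $D$ is a set of the form $D\cap H$ for a supporting hyperplane $H$ of $D$. $\operatorname{relint}$ denotes relative interior. *)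

theory Defs
  imports "HOL-Analysis.Analysis"
begin

text \<open>The dual space is identified with the space itself via the inner product.\<close>

definition polar_set :: "'a::euclidean_space set \<Rightarrow> 'a set" where
  "polar_set C = {y. \<forall>x\<in>C. y \<bullet> x \<le> 1}"

definition normal_cone :: "'a::euclidean_space set \<Rightarrow> 'a \<Rightarrow> 'a set" where
  "normal_cone C xbar = {y. \<forall>x\<in>C. y \<bullet> x \<le> y \<bullet> xbar}"

definition polar_face_at :: "'a::euclidean_space set \<Rightarrow> 'a \<Rightarrow> 'a set" where
  "polar_face_at C xbar = {y \<in> normal_cone C xbar. y \<bullet> xbar = 1}"

end

theory Submission
  imports Defs
begin

text \<open>
  Every exposed face of the polar that is neither empty nor the whole polar has the form
  \<open>C\<^sup>\<circ> \<inter> {y. \<langle>a, y\<rangle> = 1}\<close>: the offset can be normalised to \<open>1\<close> because \<open>0\<close> is an interior point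
  of \<open>C\<^sup>\<circ>\<close> (\<open>C\<close> being bounded). The normal \<open>a\<close> lies in the bipolar; as the face is nonempty,
  \<open>a\<close> touches \<open>C\<^sup>\<circ>\<close>, and separating \<open>a\<close> from \<open>C\<close> would then let us tilt a touching point
  beyond the hyperplane, so \<open>a \<in> C\<close>. For \<open>x\<in>C\<close> the set \<open>F\<^sub>x\<close> is exactly \<open>C\<^sup>\<circ> \<inter> {y. \<langle>x, y\<rangle> = 1}\<close>.
  For the relative interiors, \<open>F\<^sub>x\<close> is the section of the convex cone \<open>N\<^sub>C(x)\<close> by an affine
  hyperplane that meets its relative interior, found by pushing a point of \<open>F\<^sub>x\<close> slightly
  towards a relative interior point and rescaling.
\<close>

lemma convex_polar_set: "convex (polar_set C)"
  unfolding polar_set_def convex_def by (auto simp: inner_add_left intro!: convex_bound_le)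

lemma convex_normal_cone: "convex (normal_cone C x)"
  unfolding normal_cone_def convex_def by (auto simp: inner_add_left intro!: add_mono mult_left_mono)

lemma cone_normal_cone: "cone (normal_cone C x)"
  unfolding normal_cone_def cone_def by (auto intro: mult_left_mono)

lemma polar_face_at_eq_polar_set_Int: "polar_face_at C x = polar_set C \<inter> {y. x \<bullet> y = 1}"
  unfolding polar_face_at_def polar_set_def normal_cone_def by (auto simp: inner_commute)

lemma polar_face_at_exposed_face_of:
  assumes "x \<in> C"
  shows "polar_face_at C x exposed_face_of polar_set C"
  unfolding polar_face_at_eq_polar_set_Int
  by (rule exposed_face_of_Int_supporting_hyperplane_le[OF convex_polar_set])
     (use assms in \<open>auto simp: polar_set_def inner_commute\<close>)

lemma zero_in_interior_polar_set:
  fixes C :: "'a::euclidean_space set"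
  assumes "bounded C"
  shows "0 \<in> interior (polar_set C)"
proof -
  obtain R where R: "R > 0" "\<And>x. x \<in> C \<Longrightarrow> norm x \<le> R"
    using assms bounded_pos by blast
  have "ball 0 (1/R) \<subseteq> polar_set C"
  proof
    fix y :: 'a assume "y \<in> ball 0 (1/R)"
    then have y: "norm y \<le> 1/R" by simp
    have "y \<bullet> x \<le> 1" if "x \<in> C" for x
    proof -
      have "y \<bullet> x \<le> norm y * norm x" by (rule norm_cauchy_schwarz)
      also have "\<dots> \<le> (1/R) * R" using that y R by (intro mult_mono) auto
      finally show ?thesis using R by simp
    qed
    then show "y \<in> polar_set C" by (auto simp: polar_set_def)
  qed
  then show ?thesis
    using R unfolding mem_interior by (meson divide_pos_pos zero_less_one)
qed

lemma exposed_face_of_normalized: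
  fixes S :: "'a::euclidean_space set"
  assumes "0 \<in> interior S" "T exposed_face_of S" "T \<noteq> {}" "T \<noteq> S"
  obtains a where "\<And>y. y \<in> S \<Longrightarrow> a \<bullet> y \<le> 1" "T = S \<inter> {y. a \<bullet> y = 1}"
proof -
  obtain a b where ab: "S \<subseteq> {y. a \<bullet> y \<le> b}" "T = S \<inter> {y. a \<bullet> y = b}"
    using assms(2) unfolding exposed_face_of_def by blast
  have "a \<noteq> 0"
    using assms(3,4) ab by (cases "b = 0") auto
  obtain r where r: "r > 0" "ball 0 r \<subseteq> S"
    using assms(1) mem_interior by blast
  define s where "s = r / (2 * norm a)"
  have "s *\<^sub>R a \<in> ball 0 r"
    using \<open>a \<noteq> 0\<close> r by (simp add: s_def)
  then have "a \<bullet> (s *\<^sub>R a) \<le> b" using ab(1) r(2) by blast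
  then have "s * (a \<bullet> a) \<le> b" by simp
  moreover have "s * (a \<bullet> a) > 0" using \<open>a \<noteq> 0\<close> r by (simp add: s_def)
  ultimately have "b > 0" by linarith
  show thesis
  proof
    show "(1/b) *\<^sub>R a \<bullet> y \<le> 1" if "y \<in> S" for y
      using ab(1) that \<open>b > 0\<close> by (auto simp: divide_simps)
    show "T = S \<inter> {y. (1/b) *\<^sub>R a \<bullet> y = 1}"
      using ab(2) \<open>b > 0\<close> by (auto simp: divide_simps)
  qed
qed

text \<open>
  Without \<open>0 \<in> C\<close> the bipolar of \<open>C\<close> is the closed convex hull of \<open>C \<union> {0}\<close>, so membership
  in it does not suffice; the touching point \<open>y\<^sub>0\<close> rules out the extra points.
\<close>

lemma mem_if_touches_polar_set:
  fixes C :: "'a::euclidean_space set"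
  assumes "convex C" "closed C"
    and a: "a \<in> polar_set (polar_set C)"
    and y0: "y0 \<in> polar_set C" "a \<bullet> y0 = 1"
  shows "a \<in> C"
proof (rule ccontr)
  assume "a \<notin> C"
  then obtain w \<beta> where w: "w \<bullet> a < \<beta>" "\<And>x. x \<in> C \<Longrightarrow> w \<bullet> x > \<beta>"
    using separating_hyperplane_closed_point[OF assms(1,2)] by blast
  define e where "e = 1 / (\<bar>\<beta>\<bar> + 1)"
  have "e > 0" by (simp add: e_def)
  have "e * \<bar>\<beta>\<bar> \<le> 1" by (simp add: e_def divide_simps)
  moreover have "e * (- \<bar>\<beta>\<bar>) \<le> e * \<beta>"
    using \<open>e > 0\<close> by (intro mult_left_mono) auto
  ultimately have e: "1 + e * \<beta> \<ge> 0" by linarith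
  define y where "y = (1 + e * \<beta>) *\<^sub>R y0 - e *\<^sub>R w"
  have "y \<bullet> x \<le> 1" if x: "x \<in> C" for x
  proof -
    have "(1 + e * \<beta>) * (y0 \<bullet> x) \<le> 1 + e * \<beta>"
      using y0(1) x e by (auto simp: polar_set_def intro: mult_left_le)
    moreover have "e * (w \<bullet> x) \<ge> e * \<beta>" using w(2)[OF x] \<open>e > 0\<close> by simp
    ultimately show ?thesis by (simp add: y_def inner_diff_left)
  qed
  then have "y \<in> polar_set C" by (simp add: polar_set_def)
  then have "a \<bullet> y \<le> 1"
    using a unfolding polar_set_def[of "polar_set C"] by blast
  moreover have "a \<bullet> y = 1 + e * \<beta> - e * (w \<bullet> a)"
    using y0(2) by (simp add: y_def inner_diff_right inner_commute algebra_simps)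
  moreover have "e * (w \<bullet> a) < e * \<beta>" using w(1) \<open>e > 0\<close> by simp
  ultimately show False by linarith
qed

lemma rel_interior_convex_cone_meets_hyperplane:
  fixes K :: "'a::euclidean_space set"
  assumes "convex K" "cone K" "y \<in> K" "y \<bullet> a = 1"
  shows "rel_interior K \<inter> {y. y \<bullet> a = 1} \<noteq> {}"
proof -
  obtain z where z: "z \<in> rel_interior K"
    using assms rel_interior_eq_empty by blast
  define c where "c = z \<bullet> a"
  define e where "e = 1 / (2 * (1 + \<bar>c\<bar>))"
  have e: "e > 0" "e \<le> 1" by (auto simp: e_def divide_simps)
  define w where "w = y - e *\<^sub>R (y - z)"
  have w: "w \<in> rel_interior K"
    unfolding w_def
    by (rule rel_interior_closure_convex_shrink[OF assms(1) z])
       (use assms(3) e closure_subset in auto)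
  define v where "v = 1 - e * (1 - c)"
  have wa: "w \<bullet> a = v"
    using assms(4) by (simp add: w_def v_def c_def inner_diff_left)
  \<comment> \<open>the choice of \<open>e\<close> keeps the value of \<open>w\<close> at least \<open>1/2\<close>\<close>
  have "e * (1 - c) \<le> e * (1 + \<bar>c\<bar>)" using e by (intro mult_left_mono) auto
  also have "\<dots> = 1/2" by (simp add: e_def divide_simps)
  finally have "v > 0" by (simp add: v_def)
  have "(1/v) *\<^sub>R w \<in> {0} \<union> rel_interior K"
    using mem_cone[OF cone_rel_interior[OF assms(2)], of w "1/v"] w \<open>v > 0\<close> by simp
  moreover have "(1/v) *\<^sub>R w \<bullet> a = 1" using wa \<open>v > 0\<close> by simp
  ultimately show ?thesis by force
qed

lemma rel_interior_convex_cone_Int_hyperplane: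
  fixes K :: "'a::euclidean_space set"
  assumes "convex K" "cone K" "K \<inter> {y. y \<bullet> a = 1} \<noteq> {}"
  shows "rel_interior (K \<inter> {y. y \<bullet> a = 1}) = rel_interior K \<inter> {y. y \<bullet> a = 1}"
proof (rule convex_affine_rel_interior_Int[OF assms(1)])
  show "affine {y. y \<bullet> a = 1}"
    using affine_hyperplane[of a 1] by (simp add: inner_commute)
  show "rel_interior K \<inter> {y. y \<bullet> a = 1} \<noteq> {}"
    using assms rel_interior_convex_cone_meets_hyperplane by blast
qed

lemma exposed_faces_of_polar_set:
  fixes C :: "'a::euclidean_space set"
  assumes "compact C" "convex C"
  shows "{T. T exposed_face_of polar_set C \<and> T \<noteq> {} \<and> T \<noteq> polar_set C}
           = {polar_face_at C x | x. x \<in> C \<and> polar_face_at C x \<noteq> {}}"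
proof (intro set_eqI iffI)
  fix T assume "T \<in> {T. T exposed_face_of polar_set C \<and> T \<noteq> {} \<and> T \<noteq> polar_set C}"
  then have T: "T exposed_face_of polar_set C" "T \<noteq> {}" "T \<noteq> polar_set C" by auto
  have "0 \<in> interior (polar_set C)"
    using assms(1) by (simp add: compact_imp_bounded zero_in_interior_polar_set)
  then obtain a where a: "\<And>y. y \<in> polar_set C \<Longrightarrow> a \<bullet> y \<le> 1"
      and Ta: "T = polar_set C \<inter> {y. a \<bullet> y = 1}"
    using exposed_face_of_normalized[OF _ T] by blast
  obtain y0 where "y0 \<in> polar_set C" "a \<bullet> y0 = 1" using T(2) Ta by blast
  moreover have "a \<in> polar_set (polar_set C)"
    using a by (auto simp: polar_set_def inner_commute)
  ultimately have "a \<in> C"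
    using mem_if_touches_polar_set assms compact_imp_closed by blast
  then show "T \<in> {polar_face_at C x | x. x \<in> C \<and> polar_face_at C x \<noteq> {}}"
    using T(2) Ta polar_face_at_eq_polar_set_Int by blast
next
  fix T assume "T \<in> {polar_face_at C x | x. x \<in> C \<and> polar_face_at C x \<noteq> {}}"
  then obtain x where "x \<in> C" "T = polar_face_at C x" "T \<noteq> {}" by blast
  moreover have "0 \<in> polar_set C" "0 \<notin> polar_face_at C x"
    by (auto simp: polar_set_def polar_face_at_def)
  ultimately show "T \<in> {T. T exposed_face_of polar_set C \<and> T \<noteq> {} \<and> T \<noteq> polar_set C}"
    using polar_face_at_exposed_face_of by blast
qed

lemma rel_interior_polar_face_at:
  assumes "polar_face_at C x \<noteq> {}"
  shows "rel_interior (polar_face_at C x) = {y \<in> rel_interior (normal_cone C x). y \<bullet> x = 1}"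
proof -
  have F: "polar_face_at C x = normal_cone C x \<inter> {y. y \<bullet> x = 1}"
    by (auto simp: polar_face_at_def)
  show ?thesis
    using assms rel_interior_convex_cone_Int_hyperplane[OF convex_normal_cone cone_normal_cone]
    unfolding F by (simp add: Int_def)
qed

theorem theorem4p4:
  fixes C :: "'a::euclidean_space set"
  assumes "compact C" and "convex C"
  shows "({T. T exposed_face_of polar_set C \<and> T \<noteq> {} \<and> T \<noteq> polar_set C}
           = {polar_face_at C xbar | xbar. xbar \<in> C \<and> polar_face_at C xbar \<noteq> {}})
         \<and> (\<forall>xbar\<in>C. polar_face_at C xbar \<noteq> {} \<longrightarrow>
           rel_interior (polar_face_at C xbar)
             = {y \<in> rel_interior (normal_cone C xbar). y \<bullet> xbar = 1})"
  using exposed_faces_of_polar_set[OF assms] rel_interior_polar_face_at by (intro conjI ballI impI)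

end
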